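(* Let $p\ge2$ and $n,\ell,t$ be positive integers. Every $t$-tandem-duplication-correcting code $\mathcal{C}\subseteq\mathbb{Z}_p^n$ with respect to duplication length $\ell$ satisfies $$|\mathcal{C}|\le p^{\ell}\sum_{w=0}^{\lfloor n/\ell\rfloor-1}\ \sum_{r=0}^{n-(w+1)\ell}N_{p,\ell}\bigl(n-(w+1)\ell,r\bigr)\frac{\binom{r+w+t}{w+t}}{\binom{r+t}{t}}.$$
   Context: $\mathbb{Z}_p=\{0,1,\dots,p-1\}$. For a word $\mathbf{x}$ over $\mathbb{Z}_p$ and $0\le i\le|\mathbf{x}|-\ell$, write $\mathbf{x}=\mathbf{u}\mathbf{v}\mathbf{w}$ with $|\mathbf{u}|=i$, $|\mathbf{v}|=\ell$; the tandem duplication of length $\ell$ at position $i$ produces $\mathbf{u}\mathbf{v}\mathbf{v}\mathbf{w}$. The ball $B_t^{\tau_\ell}(\mathbf{x})$ is the set of words obtainable from $\mathbf{x}$ by at most $t$ successive tandem duplications of length $\ell$. A code $\mathcal{C}\subseteq\mathbb{Z}_p^n$ is $t$-tandem-duplication-correcting (duplication length $\ell$) if $B_t^{\tau_\ell}(\mathbf{c})\cap B_t^{\tau_\ell}(\mathbf{c}')=\emptyset$ for all distinct $\mathbf{c},\mathbf{c}'\in\mathcal{C}$. $N_{p,\ell}(m,r)$ denotes the number of words in $\mathbb{Z}_p^m$ of Hamming weight $r$ that contain no $\ell$ consecutive zeros. *)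

theory Defs
  imports Complex_Main
begin

definition words :: "nat \<Rightarrow> nat \<Rightarrow> nat list set" where
  "words p n = {x. length x = n \<and> set x \<subseteq> {..<p}}"

text \<open>Tandem duplication of length l at position i: x = u v w with |u| = i, |v| = l
  gives u v v w, i.e. take (i+l) x @ drop i x.\<close>
definition tdup :: "nat \<Rightarrow> nat \<Rightarrow> nat list \<Rightarrow> nat list" where
  "tdup l i x = take (i + l) x @ drop i x"

definition dup_step :: "nat \<Rightarrow> nat list \<Rightarrow> nat list \<Rightarrow> bool" where
  "dup_step l x y \<longleftrightarrow> (\<exists>i. i + l \<le> length x \<and> y = tdup l i x)"

definition dup_ball :: "nat \<Rightarrow> nat \<Rightarrow> nat list \<Rightarrow> nat list set" where
  "dup_ball l t x = {y. \<exists>k\<le>t. (dup_step l ^^ k) x y}"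

definition tdc_code :: "nat \<Rightarrow> nat \<Rightarrow> nat \<Rightarrow> nat \<Rightarrow> nat list set \<Rightarrow> bool" where
  "tdc_code p n l t C \<longleftrightarrow> C \<subseteq> words p n \<and>
     (\<forall>c\<in>C. \<forall>c'\<in>C. c \<noteq> c' \<longrightarrow> dup_ball l t c \<inter> dup_ball l t c' = {})"

definition hweight :: "nat list \<Rightarrow> nat" where
  "hweight x = length (filter (\<lambda>a. a \<noteq> 0) x)"

definition no_zero_run :: "nat \<Rightarrow> nat list \<Rightarrow> bool" where
  "no_zero_run l x \<longleftrightarrow> \<not> (\<exists>i. i + l \<le> length x \<and> (\<forall>j<l. x ! (i + j) = 0))"

definition N_count :: "nat \<Rightarrow> nat \<Rightarrow> nat \<Rightarrow> nat \<Rightarrow> nat" where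
  "N_count p l m r = card {x \<in> words p m. hweight x = r \<and> no_zero_run l x}"

end

theory Submission
  imports Defs "HOL-Number_Theory.Cong"
begin

text \<open>A word x is determined by its first l symbols and its l-step difference word
  s with s_j = (x_(j+l) - x_j) mod p, and a tandem duplication of length l inserts l zeros into s.
  Describe s by its nonzero entries and the lengths of its r + 1 zero runs, and write each run
  length as \<rho> + l \<beta> with \<rho> < l. A codeword then has a key: its prefix, w = \<Sum>\<beta>, and the
  reduct of s (every run shortened to \<rho>), a word of length n - (w + 1) l of weight r without
  l consecutive zeros. Within one key class a codeword is fixed by its block vector \<beta> in
  \<nat>^(r+1) of sum w, and t duplications can add to \<beta> any vector of sum t. For a t-correcting
  code these translates are disjoint for distinct codewords and all have sum w + t, so the
  class has at most C(r+w+t, w+t) / C(r+t, t) members; summing over keys gives the bound.\<close>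

fun zero_runs :: "nat list \<Rightarrow> nat list" where
  "zero_runs [] = [0]"
| "zero_runs (a # s) =
     (if a = 0 then (hd (zero_runs s) + 1) # tl (zero_runs s) else 0 # zero_runs s)"

definition nonzeros :: "nat list \<Rightarrow> nat list" where
  "nonzeros s = filter (\<lambda>a. a \<noteq> 0) s"

fun from_runs :: "nat list \<Rightarrow> nat list \<Rightarrow> nat list" where
  "from_runs [] gs = replicate (hd gs) 0"
| "from_runs (a # as) gs = replicate (hd gs) 0 @ a # from_runs as (tl gs)"

definition insert_zeros :: "nat \<Rightarrow> nat \<Rightarrow> nat list \<Rightarrow> nat list" where
  "insert_zeros l i s = take i s @ replicate l 0 @ drop i s"

lemma zero_runs_neq_Nil [simp]: "zero_runs s \<noteq> []"
  by (induction s) auto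

lemma zero_notin_nonzeros [simp]: "0 \<notin> set (nonzeros s)"
  by (simp add: nonzeros_def)

lemma hweight_eq_length_nonzeros: "hweight x = length (nonzeros x)"
  by (simp add: hweight_def nonzeros_def)

lemma length_zero_runs: "length (zero_runs s) = length (nonzeros s) + 1"
  by (induction s) (auto simp: nonzeros_def)

lemma zero_runs_replicate_append:
  "zero_runs (replicate m 0 @ s) = (hd (zero_runs s) + m) # tl (zero_runs s)"
  by (induction m) auto

lemma from_runs_nonzeros_zero_runs: "from_runs (nonzeros s) (zero_runs s) = s"
proof (induction s)
  case (Cons a s)
  then show ?case
    by (cases "zero_runs s"; cases "nonzeros s") (auto simp: nonzeros_def)
qed (simp add: nonzeros_def)

lemma nonzeros_from_runs: "0 \<notin> set as \<Longrightarrow> nonzeros (from_runs as gs) = as"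
  by (induction as arbitrary: gs) (auto simp: nonzeros_def)

lemma zero_runs_from_runs:
  "0 \<notin> set as \<Longrightarrow> length gs = length as + 1 \<Longrightarrow> zero_runs (from_runs as gs) = gs"
proof (induction as arbitrary: gs)
  case Nil
  then show ?case using zero_runs_replicate_append[of "hd gs" "[]"] by (cases gs) auto
next
  case (Cons a as)
  then show ?case using zero_runs_replicate_append[of "hd gs"] by (cases gs) auto
qed

lemma length_from_runs:
  "length gs = length as + 1 \<Longrightarrow> length (from_runs as gs) = length as + sum_list gs"
proof (induction as arbitrary: gs)
  case Nil
  then show ?case by (cases gs) auto
next
  case (Cons a as)
  then show ?case by (cases gs) auto
qed

lemma set_from_runs: "set (from_runs as gs) \<subseteq> set as \<union> {0}"
  by (induction as arbitrary: gs) auto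

lemma zero_runs_nonzeros_inject:
  "nonzeros s = nonzeros s' \<Longrightarrow> zero_runs s = zero_runs s' \<Longrightarrow> s = s'"
  by (metis from_runs_nonzeros_zero_runs)

lemma length_eq_nonzeros_zero_runs: "length s = length (nonzeros s) + sum_list (zero_runs s)"
  by (metis from_runs_nonzeros_zero_runs length_from_runs length_zero_runs)

lemma nonzeros_insert_zeros: "nonzeros (insert_zeros l i s) = nonzeros s"
proof -
  have "nonzeros (insert_zeros l i s) = nonzeros (take i s) @ nonzeros (drop i s)"
    by (simp add: nonzeros_def insert_zeros_def)
  then show ?thesis
    by (metis append_take_drop_id filter_append nonzeros_def)
qed

lemma insert_zeros_Suc_Cons: "insert_zeros l (Suc i) (a # s) = a # insert_zeros l i s"
  by (simp add: insert_zeros_def)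

lemma zero_runs_insert_zeros:
  "k < length (zero_runs s) \<Longrightarrow>
   \<exists>i\<le>length s. zero_runs (insert_zeros l i s) = (zero_runs s)[k := zero_runs s ! k + l]"
proof (induction s arbitrary: k)
  case Nil
  then show ?case
    by (auto simp: insert_zeros_def zero_runs_replicate_append[of l "[]", simplified])
next
  case (Cons a s)
  show ?case
  proof (cases k)
    case 0
    then show ?thesis
      using zero_runs_replicate_append[of l "a # s"]
      by (intro exI[of _ 0]) (simp add: insert_zeros_def)
  next
    case (Suc k')
    \<comment> \<open>a zero at the front belongs to the first run, a nonzero one opens a new run\<close>
    define j where "j = (if a = 0 then k else k')"
    have "j < length (zero_runs s)" using Cons.prems Suc by (auto simp: j_def)
    then obtain i where "i \<le> length s"
      and "zero_runs (insert_zeros l i s) = (zero_runs s)[j := zero_runs s ! j + l]"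
      using Cons.IH by blast
    then show ?thesis
      using Suc
    by (intro exI[of _ "Suc i"]) (cases "zero_runs s"; auto simp: j_def insert_zeros_Suc_Cons)
  qed
qed

lemma zero_runs_hd_ge: "l \<le> length x \<Longrightarrow> \<forall>j<l. x ! j = 0 \<Longrightarrow> l \<le> hd (zero_runs x)"
proof (induction l arbitrary: x)
  case (Suc l)
  then obtain x' where x: "x = 0 # x'" by (cases x) auto
  with Suc.prems have "l \<le> hd (zero_runs x')" by (intro Suc.IH) auto
  then show ?case using x by simp
qed simp

lemma no_zero_run_if_zero_runs_less:
  "\<forall>g\<in>set (zero_runs x). g < l \<Longrightarrow> no_zero_run l x"
proof (induction x)
  case (Cons a x)
  have tail: "no_zero_run l x"
    using Cons by (intro Cons.IH) (cases "zero_runs x"; auto split: if_splits)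
  have head: "\<not> (\<forall>j<l. (a # x) ! j = 0)" if "l \<le> length (a # x)"
    using zero_runs_hd_ge[OF that] Cons.prems by (metis hd_in_set leD zero_runs_neq_Nil)
  show ?case
    unfolding no_zero_run_def
  proof (intro notI, elim exE conjE)
    fix i assume "i + l \<le> length (a # x)" "\<forall>j<l. (a # x) ! (i + j) = 0"
    then show False
      using tail head unfolding no_zero_run_def by (cases i) auto
  qed
qed (simp add: no_zero_run_def)

definition diff_word :: "nat \<Rightarrow> nat \<Rightarrow> nat list \<Rightarrow> nat list" where
  "diff_word p l x = map (\<lambda>j. (x ! (j + l) + (p - x ! j)) mod p) [0..<length x - l]"

lemma length_diff_word [simp]: "length (diff_word p l x) = length x - l"
  by (simp add: diff_word_def)

lemma nth_diff_word:
  "j < length x - l \<Longrightarrow> diff_word p l x ! j = (x ! (j + l) + (p - x ! j)) mod p"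
  by (simp add: diff_word_def)

lemma set_diff_word: "0 < p \<Longrightarrow> set (diff_word p l x) \<subseteq> {..<p}"
  by (auto simp: diff_word_def)

lemma length_tdup [simp]: "i + l \<le> length x \<Longrightarrow> length (tdup l i x) = length x + l"
  by (simp add: tdup_def)

lemma nth_tdup:
  "i + l \<le> length x \<Longrightarrow> j < length x + l \<Longrightarrow>
   tdup l i x ! j = (if j < i + l then x ! j else x ! (j - l))"
  by (auto simp: tdup_def nth_append min_def)

lemma diff_word_tdup:
  assumes "i + l \<le> length x" "set x \<subseteq> {..<p}"
  shows "diff_word p l (tdup l i x) = insert_zeros l i (diff_word p l x)"
proof (rule nth_equalityI)
  show "length (diff_word p l (tdup l i x)) = length (insert_zeros l i (diff_word p l x))"
    using assms by (simp add: insert_zeros_def)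
  fix j assume "j < length (diff_word p l (tdup l i x))"
  then have j: "j < length x" using assms by simp
  consider "j < i" | "i \<le> j" "j < i + l" | "i + l \<le> j" by linarith
  then show "diff_word p l (tdup l i x) ! j = insert_zeros l i (diff_word p l x) ! j"
  proof cases
    case 2
    \<comment> \<open>inside the copy, position j and j + l both carry the symbol x ! j\<close>
    have "x ! j < p" using j assms(2) by (meson lessThan_iff nth_mem subsetD)
    then show ?thesis
      using 2 j assms(1) by (simp add: nth_diff_word nth_tdup insert_zeros_def nth_append)
  qed (use j assms(1) in
      \<open>simp_all add: nth_diff_word nth_tdup insert_zeros_def nth_append min_def\<close>)
qed

lemma eq_if_take_diff_word_eq:
  assumes "0 < l" "length x = length y" "take l x = take l y" "diff_word p l x = diff_word p l y"
    and "set x \<subseteq> {..<p}" "set y \<subseteq> {..<p}"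
  shows "x = y"
proof (rule nth_equalityI)
  show "length x = length y" by fact
  show "x ! j = y ! j" if "j < length x" for j
    using that
  proof (induction j rule: less_induct)
    case (less j)
    show ?case
    proof (cases "j < l")
      case True
      then show ?thesis using assms(3) by (metis nth_take)
    next
      case False
      have "x ! (j - l) = y ! (j - l)" using less False assms(1) by simp
      moreover have "diff_word p l x ! (j - l) = diff_word p l y ! (j - l)" using assms(4) by simp
      ultimately have "[x ! j + (p - x ! (j - l)) = y ! j + (p - x ! (j - l))] (mod p)"
        using False less.prems assms(2) by (simp add: nth_diff_word cong_def)
      moreover have "x ! j < p"
        using less.prems assms(5) by (meson lessThan_iff nth_mem subsetD)
      moreover have "y ! j < p"
        using less.prems assms(2,6) by (metis lessThan_iff nth_mem subsetD)
      ultimately show ?thesis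
        by (simp add: cong_add_rcancel_nat cong_less_modulus_unique_nat)
    qed
  qed
qed

lemma dup_steps_invariants:
  "(dup_step l ^^ t) x y \<Longrightarrow>
   take l y = take l x \<and> set y \<subseteq> set x \<and> length y = length x + t * l"
proof (induction t arbitrary: y)
  case (Suc t)
  from Suc.prems obtain y' where "(dup_step l ^^ t) x y'" "dup_step l y' y"
    by (rule relpowp_Suc_E)
  then obtain i where "(dup_step l ^^ t) x y'" "i + l \<le> length y'" "y = tdup l i y'"
    by (auto simp: dup_step_def)
  moreover have "set (tdup l i y') \<subseteq> set y'"
    by (auto simp: tdup_def dest: in_set_takeD in_set_dropD)
  ultimately show ?case using Suc.IH by (fastforce simp: tdup_def min_def)
qed simp

lemma dup_step_lengthens_zero_run:
  assumes "l \<le> length x" "set x \<subseteq> {..<p}" "k < length (zero_runs (diff_word p l x))"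
  obtains y where "dup_step l x y" "nonzeros (diff_word p l y) = nonzeros (diff_word p l x)"
    "zero_runs (diff_word p l y) =
       (zero_runs (diff_word p l x))[k := zero_runs (diff_word p l x) ! k + l]"
proof -
  obtain i where i: "i \<le> length x - l"
    and runs: "zero_runs (insert_zeros l i (diff_word p l x)) =
      (zero_runs (diff_word p l x))[k := zero_runs (diff_word p l x) ! k + l]"
    using zero_runs_insert_zeros[OF assms(3)] by auto
  with assms(1) have il: "i + l \<le> length x" by simp
  show thesis
  proof
    show "dup_step l x (tdup l i x)" using il by (auto simp: dup_step_def)
  qed (use runs diff_word_tdup[OF il assms(2)] in \<open>simp_all add: nonzeros_insert_zeros\<close>)
qed

lemma dup_steps_lengthen_zero_runs:
  assumes "l \<le> length x" "set x \<subseteq> {..<p}"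
  shows "length e = length (zero_runs (diff_word p l x)) \<Longrightarrow>
    \<exists>y. (dup_step l ^^ sum_list e) x y \<and>
    nonzeros (diff_word p l y) = nonzeros (diff_word p l x) \<and>
    zero_runs (diff_word p l y) = map2 (\<lambda>g b. g + l * b) (zero_runs (diff_word p l x)) e"
proof (induction "sum_list e" arbitrary: e)
  case 0
  then have "map2 (\<lambda>g b. g + l * b) (zero_runs (diff_word p l x)) e = zero_runs (diff_word p l x)"
    by (intro nth_equalityI) auto
  then show ?case using 0 by (simp flip: 0(1))
next
  case (Suc t)
  then obtain k m where k: "k < length e" "e ! k = Suc m"
    by (metis in_set_conv_nth not0_implies_Suc sum_list_eq_0_iff nat.simps(3))
  define e' where "e' = e[k := m]"
  have "sum_list e' = t" "length e' = length (zero_runs (diff_word p l x))"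
    using Suc.hyps(2) Suc.prems k by (simp_all add: e'_def sum_list_update)
  then obtain y' where y': "(dup_step l ^^ t) x y'"
      "nonzeros (diff_word p l y') = nonzeros (diff_word p l x)"
      "zero_runs (diff_word p l y') = map2 (\<lambda>g b. g + l * b) (zero_runs (diff_word p l x)) e'"
    using Suc.hyps(1) by metis
  then have "l \<le> length y'" "set y' \<subseteq> {..<p}"
    using dup_steps_invariants[OF y'(1)] assms by auto
  moreover have "k < length (zero_runs (diff_word p l y'))"
    using y'(2) k Suc.prems by (simp add: length_zero_runs)
  ultimately obtain y where "dup_step l y' y"
      "nonzeros (diff_word p l y) = nonzeros (diff_word p l y')"
      "zero_runs (diff_word p l y) =
         (zero_runs (diff_word p l y'))[k := zero_runs (diff_word p l y') ! k + l]"
    by (rule dup_step_lengthens_zero_run)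
  moreover have "(zero_runs (diff_word p l y'))[k := zero_runs (diff_word p l y') ! k + l] =
      map2 (\<lambda>g b. g + l * b) (zero_runs (diff_word p l x)) e"
    using y'(3) k Suc.prems
    by (intro nth_equalityI) (auto simp: e'_def nth_list_update algebra_simps)
  ultimately show ?case
    using y' Suc.hyps(2) by (metis relpowp_Suc_I)
qed

definition run_blocks :: "nat \<Rightarrow> nat list \<Rightarrow> nat list" where
  "run_blocks l s = map (\<lambda>g. g div l) (zero_runs s)"

definition reduce_runs :: "nat \<Rightarrow> nat list \<Rightarrow> nat list" where
  "reduce_runs l s = from_runs (nonzeros s) (map (\<lambda>g. g mod l) (zero_runs s))"

definition dup_key :: "nat \<Rightarrow> nat \<Rightarrow> nat list \<Rightarrow> nat list \<times> nat \<times> nat list" where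
  "dup_key p l c =
     (take l c, sum_list (run_blocks l (diff_word p l c)), reduce_runs l (diff_word p l c))"

lemma length_run_blocks: "length (run_blocks l s) = length (nonzeros s) + 1"
  by (simp add: run_blocks_def length_zero_runs)

lemma nonzeros_reduce_runs: "nonzeros (reduce_runs l s) = nonzeros s"
  by (simp add: reduce_runs_def nonzeros_from_runs)

lemma zero_runs_reduce_runs: "zero_runs (reduce_runs l s) = map (\<lambda>g. g mod l) (zero_runs s)"
  by (simp add: reduce_runs_def zero_runs_from_runs length_zero_runs)

lemma map2_add_mult_eq_mod_div:
  fixes G e :: "nat list"
  shows "map2 (\<lambda>g b. g + l * b) G e =
    map2 (\<lambda>\<rho> \<beta>. \<rho> + l * \<beta>) (map (\<lambda>g. g mod l) G) (map2 (+) (map (\<lambda>g. g div l) G) e)"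
proof (induction G arbitrary: e)
  case (Cons g G)
  have "g + l * b = g mod l + l * (g div l + b)" for b
    using mod_mult_div_eq[of g l] by (simp add: distrib_left)
  with Cons show ?case by (cases e) auto
qed simp

lemma sum_list_map2_plus:
  fixes xs ys :: "nat list"
  shows "length xs = length ys \<Longrightarrow> sum_list (map2 (+) xs ys) = sum_list xs + sum_list ys"
proof (induction xs arbitrary: ys)
  case (Cons x xs)
  then show ?case by (cases ys) auto
qed simp

lemma inj_on_map2_plus: "inj_on (map2 (+) (xs :: nat list)) {ys. length ys = length xs}"
proof (rule inj_onI)
  fix ys zs assume "ys \<in> {ys. length ys = length xs}" "zs \<in> {ys. length ys = length xs}"
    and eq: "map2 (+) xs ys = map2 (+) xs zs"
  then have len: "length ys = length xs" "length zs = length xs" by auto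
  then show "ys = zs"
  proof (intro nth_equalityI)
    fix i assume "i < length ys"
    moreover have "map2 (+) xs ys ! i = map2 (+) xs zs ! i" using eq by simp
    ultimately show "ys ! i = zs ! i" using len by simp
  qed (use len in simp)
qed

lemma card_mult_le_card_if_disjoint:
  assumes "finite T" "\<And>i. i \<in> I \<Longrightarrow> A i \<subseteq> T \<and> card (A i) = m"
    and "\<And>i j. i \<in> I \<Longrightarrow> j \<in> I \<Longrightarrow> i \<noteq> j \<Longrightarrow> A i \<inter> A j = {}"
  shows "card I * m \<le> card T"
proof (cases "finite I")
  case True
  have "card (\<Union>i\<in>I. A i) = (\<Sum>i\<in>I. card (A i))"
    using True assms by (intro card_UN_disjoint) (auto intro: finite_subset)
  then have "card I * m = card (\<Union>i\<in>I. A i)"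
    using assms by simp
  also have "\<dots> \<le> card T"
    using assms by (intro card_mono) auto
  finally show ?thesis .
qed simp

lemma dup_balls_meet_if_shifted_blocks_eq:
  assumes "0 < l" "c \<in> words p n" "c' \<in> words p n" "l \<le> n"
    and "take l c = take l c'"
      "reduce_runs l (diff_word p l c) = reduce_runs l (diff_word p l c')"
    and "length e = length (run_blocks l (diff_word p l c))"
      "length e' = length (run_blocks l (diff_word p l c'))" "sum_list e = t" "sum_list e' = t"
    and "map2 (+) (run_blocks l (diff_word p l c)) e =
      map2 (+) (run_blocks l (diff_word p l c')) e'"
  shows "dup_ball l t c \<inter> dup_ball l t c' \<noteq> {}"
proof -
  have c: "l \<le> length c" "set c \<subseteq> {..<p}" "l \<le> length c'" "set c' \<subseteq> {..<p}"
    using assms(2-4) by (auto simp: words_def)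
  obtain y where y: "(dup_step l ^^ t) c y"
      "nonzeros (diff_word p l y) = nonzeros (diff_word p l c)"
      "zero_runs (diff_word p l y) = map2 (\<lambda>g b. g + l * b) (zero_runs (diff_word p l c)) e"
    using dup_steps_lengthen_zero_runs[OF c(1,2), of e] assms(7,9) by (auto simp: run_blocks_def)
  obtain y' where y': "(dup_step l ^^ t) c' y'"
      "nonzeros (diff_word p l y') = nonzeros (diff_word p l c')"
      "zero_runs (diff_word p l y') = map2 (\<lambda>g b. g + l * b) (zero_runs (diff_word p l c')) e'"
    using dup_steps_lengthen_zero_runs[OF c(3,4), of e'] assms(8,10) by (auto simp: run_blocks_def)
  \<comment> \<open>both sides decompose into the common reduced runs plus l times the common shifted blocks\<close>
  have "zero_runs (diff_word p l y) = zero_runs (diff_word p l y')"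
    using y(3) y'(3) assms(6,11)
      map2_add_mult_eq_mod_div[of l "zero_runs (diff_word p l c)" e]
      map2_add_mult_eq_mod_div[of l "zero_runs (diff_word p l c')" e']
    by (metis run_blocks_def zero_runs_reduce_runs)
  moreover have "nonzeros (diff_word p l y) = nonzeros (diff_word p l y')"
    using y(2) y'(2) assms(6) by (metis nonzeros_reduce_runs)
  ultimately have "diff_word p l y = diff_word p l y'"
    by (rule zero_runs_nonzeros_inject[rotated])
  moreover have "take l y = take l y'" "length y = length y'"
    and "set y \<subseteq> {..<p}" "set y' \<subseteq> {..<p}"
    using dup_steps_invariants[OF y(1)] dup_steps_invariants[OF y'(1)] assms(2,3,5) c
    by (auto simp: words_def)
  ultimately have "y = y'"
    using eq_if_take_diff_word_eq assms(1) by blast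
  then show ?thesis
    using y(1) y'(1) by (auto simp: dup_ball_def)
qed

lemma card_dup_key_class:
  assumes code: "tdc_code p n l t C" and "0 < l" "l \<le> n"
  shows "card {c \<in> C. dup_key p l c = (u, w, z)} * ((hweight z + t) choose t)
    \<le> (hweight z + w + t) choose (w + t)"
proof -
  define K where "K = {c \<in> C. dup_key p l c = (u, w, z)}"
  define r where "r = hweight z"
  define B where "B c = run_blocks l (diff_word p l c)" for c
  define shifts where "shifts c = map2 (+) (B c) ` {e. length e = Suc r \<and> sum_list e = t}" for c
  have C: "C \<subseteq> words p n"
    and disjoint: "\<forall>c\<in>C. \<forall>c'\<in>C. c \<noteq> c' \<longrightarrow> dup_ball l t c \<inter> dup_ball l t c' = {}"
    using code by (auto simp: tdc_code_def)
  have K: "take l c = u" "reduce_runs l (diff_word p l c) = z" "sum_list (B c) = w"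
      "length (B c) = Suc r" if "c \<in> K" for c
    using that nonzeros_reduce_runs[of l "diff_word p l c"]
    by (auto simp: K_def dup_key_def B_def r_def hweight_eq_length_nonzeros length_run_blocks)
  have "card K * ((t + r) choose t) \<le> card {b. length b = Suc r \<and> sum_list b = w + t}"
  proof (rule card_mult_le_card_if_disjoint[where A = shifts])
    show "finite {b. length b = Suc r \<and> sum_list b = w + t}"
      by (rule card_ge_0_finite) (simp add: card_length_sum_list)
  next
    fix c assume "c \<in> K"
    then have "inj_on (map2 (+) (B c)) {e. length e = Suc r \<and> sum_list e = t}"
      using inj_on_map2_plus[of "B c"] K(4) by (auto intro: inj_on_subset)
    then show "shifts c \<subseteq> {b. length b = Suc r \<and> sum_list b = w + t} \<and>
        card (shifts c) = (t + r) choose t"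
      using K[OF \<open>c \<in> K\<close>]
      by (auto simp: shifts_def card_image card_length_sum_list sum_list_map2_plus)
  next
    fix c c' assume cc': "c \<in> K" "c' \<in> K" "c \<noteq> c'"
    show "shifts c \<inter> shifts c' = {}"
    proof (rule ccontr)
      assume "shifts c \<inter> shifts c' \<noteq> {}"
      then obtain e e' where "length e = Suc r" "sum_list e = t" "length e' = Suc r"
          "sum_list e' = t" "map2 (+) (B c) e = map2 (+) (B c') e'"
        by (auto simp: shifts_def)
      then have "dup_ball l t c \<inter> dup_ball l t c' \<noteq> {}"
        using K[OF cc'(1)] K[OF cc'(2)] cc' C(1) assms(2,3) unfolding B_def K_def
        by (intro dup_balls_meet_if_shifted_blocks_eq) auto
      then show False using disjoint cc' by (auto simp: K_def)
    qed
  qed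
  then show ?thesis
    by (simp add: K_def r_def card_length_sum_list add.commute add.left_commute)
qed

definition no_zero_run_words :: "nat \<Rightarrow> nat \<Rightarrow> nat \<Rightarrow> nat list set" where
  "no_zero_run_words p l m = {z \<in> words p m. no_zero_run l z}"

lemma words_eq_lists: "words p n = {xs. set xs \<subseteq> {..<p} \<and> length xs = n}"
  unfolding words_def by blast

lemma finite_words: "finite (words p n)"
  unfolding words_eq_lists by (rule finite_lists_length_eq) simp

lemma card_words: "card (words p n) = p ^ n"
  unfolding words_eq_lists by (simp add: card_lists_length_eq)

lemma finite_no_zero_run_words: "finite (no_zero_run_words p l m)"
  by (simp add: no_zero_run_words_def finite_words)

lemma sum_list_eq_mod_div:
  fixes G :: "nat list"
  shows "sum_list G = l * sum_list (map (\<lambda>g. g div l) G) + sum_list (map (\<lambda>g. g mod l) G)"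
  by (induction G) (simp_all add: distrib_left)

lemma dup_key_mem:
  assumes "c \<in> words p n" "0 < l" "l \<le> n" "0 < p"
  shows "dup_key p l c \<in>
    words p l \<times> (SIGMA w:{..<n div l}. no_zero_run_words p l (n - (w + 1) * l))"
proof -
  define s where "s = diff_word p l c"
  define w where "w = sum_list (run_blocks l s)"
  define z where "z = reduce_runs l s"
  have c: "length c = n" "set c \<subseteq> {..<p}" using assms(1) by (auto simp: words_def)
  then have "take l c \<in> words p l" using assms(3) by (auto simp: words_def dest: in_set_takeD)
  \<comment> \<open>every zero run of s loses l times its block count, and s itself is l shorter than c\<close>
  have "length z + l * w = length s"
    using length_eq_nonzeros_zero_runs[of s] length_eq_nonzeros_zero_runs[of z]
      sum_list_eq_mod_div[of "zero_runs s" l]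
    by (simp add: z_def w_def run_blocks_def nonzeros_reduce_runs zero_runs_reduce_runs)
  moreover have "length s = n - l" using c by (simp add: s_def)
  ultimately have lz: "length z = n - (w + 1) * l" and "(w + 1) * l \<le> n"
    using assms(3) by (simp_all add: algebra_simps)
  then have "w < n div l" using less_eq_div_iff_mult_less_eq[OF assms(2), of "w + 1" n] by simp
  moreover have "set z \<subseteq> {..<p}"
    using set_from_runs[of "nonzeros s"] set_diff_word[OF assms(4), of l c] assms(4)
    by (fastforce simp: z_def reduce_runs_def s_def nonzeros_def)
  moreover have "no_zero_run l z"
    using assms(2) by (intro no_zero_run_if_zero_runs_less) (auto simp: z_def zero_runs_reduce_runs)
  ultimately show ?thesis
    using \<open>take l c \<in> words p l\<close> lz
    by (simp add: dup_key_def s_def w_def z_def no_zero_run_words_def words_def)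
qed

lemma real_card_le_sum_fibre_bounds:
  assumes "finite A" "finite B" "f ` A \<subseteq> B"
    and "\<And>b. b \<in> B \<Longrightarrow> real (card {a \<in> A. f a = b}) \<le> g b"
  shows "real (card A) \<le> sum g B"
proof -
  have "real (card A) = (\<Sum>b\<in>B. \<Sum>a\<in>{a \<in> A. f a = b}. 1)"
    using sum.group[OF assms(1-3), of "\<lambda>_. 1 :: real"] by simp
  also have "\<dots> \<le> sum g B"
    using assms(4) by (intro sum_mono) simp
  finally show ?thesis .
qed

lemma sum_no_zero_run_words_by_weight:
  "(\<Sum>z\<in>no_zero_run_words p l m. f (hweight z)) =
    (\<Sum>r=0..m. of_nat (N_count p l m r) * f r)"
proof -
  have "hweight z \<in> {0..m}" if "z \<in> no_zero_run_words p l m" for z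
    using that length_filter_le[of _ z] by (auto simp: no_zero_run_words_def words_def hweight_def)
  then have "(\<Sum>z\<in>no_zero_run_words p l m. f (hweight z)) =
      (\<Sum>r=0..m. \<Sum>z\<in>{z \<in> no_zero_run_words p l m. hweight z = r}. f (hweight z))"
    by (intro sum.group[symmetric] finite_no_zero_run_words) auto
  also have "\<dots> = (\<Sum>r=0..m. of_nat (N_count p l m r) * f r)"
  proof (intro sum.cong refl)
    fix r
    have "{z \<in> no_zero_run_words p l m. hweight z = r} =
        {x \<in> words p m. hweight x = r \<and> no_zero_run l x}"
      by (auto simp: no_zero_run_words_def)
    then show "(\<Sum>z\<in>{z \<in> no_zero_run_words p l m. hweight z = r}. f (hweight z)) =
        of_nat (N_count p l m r) * f r"
      by (simp add: N_count_def)
  qed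
  finally show ?thesis .
qed

theorem lemma3:
  fixes p n l t :: nat and C :: "nat list set"
  assumes "p \<ge> 2" and "n > 0" and "l > 0" and "t > 0" and "n \<ge> l"
    and "tdc_code p n l t C"
  shows "real (card C) \<le> real p ^ l *
    (\<Sum>w<n div l. \<Sum>r=0..n - (w + 1) * l.
       real (N_count p l (n - (w + 1) * l) r) *
       (real ((r + w + t) choose (w + t)) / real ((r + t) choose t)))"
proof -
  define F where "F w r = real ((r + w + t) choose (w + t)) / real ((r + t) choose t)" for w r
  define S where "S = (SIGMA w:{..<n div l}. no_zero_run_words p l (n - (w + 1) * l))"
  have C: "C \<subseteq> words p n" using assms(6) by (simp add: tdc_code_def)
  have "real (card C) \<le> (\<Sum>(u, w, z)\<in>words p l \<times> S. F w (hweight z))"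
  proof (rule real_card_le_sum_fibre_bounds)
    show "finite C" using C finite_words by (rule finite_subset)
    show "finite (words p l \<times> S)"
      by (simp add: S_def finite_words finite_no_zero_run_words)
    show "dup_key p l ` C \<subseteq> words p l \<times> S"
      unfolding S_def using C assms(1) by (intro image_subsetI dup_key_mem[OF _ assms(3,5)]) auto
  next
    fix k :: "nat list \<times> nat \<times> nat list"
    obtain u w z where k: "k = (u, w, z)" by (cases k)
    have "real (card {c \<in> C. dup_key p l c = k}) * real ((hweight z + t) choose t)
        \<le> real ((hweight z + w + t) choose (w + t))"
      using of_nat_mono[OF card_dup_key_class[OF assms(6,3,5), of u w z]] k by simp
    then show "real (card {c \<in> C. dup_key p l c = k}) \<le> (\<lambda>(u, w, z). F w (hweight z)) k"
      by (simp add: k F_def pos_le_divide_eq)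
  qed
  also have "\<dots> = real p ^ l * (\<Sum>(w, z)\<in>S. F w (hweight z))"
    unfolding sum.cartesian_product[symmetric] by (simp add: card_words)
  also have "(\<Sum>(w, z)\<in>S. F w (hweight z)) =
      (\<Sum>w<n div l. \<Sum>z\<in>no_zero_run_words p l (n - (w + 1) * l). F w (hweight z))"
    by (simp add: S_def sum.Sigma finite_no_zero_run_words)
  finally show ?thesis
    unfolding sum_no_zero_run_words_by_weight by (simp add: F_def)
qed

end
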